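(* Let $K>1$, $d\ge1$, and $\alpha_1,\dots,\alpha_K>0$. For $k=1,\dots,K$ let $p_0^{(k)}=\mathcal{N}({\bm{0}},\alpha_k{\bm{I}}_d)$, and let $p_0=\mathrm{PoE}(p_0^{(1)},\dots,p_0^{(K)})$. For any initial distribution $q_0$, denote by $q_t$ the law at time $t$ of the solution of the forward VP SDE started from $q_0$. Then for each $t\in(0,T]$, $$p_t=\mathrm{PoE}(p_t^{(1)},\dots,p_t^{(K)})$$ if and only if $\alpha_1=\dots=\alpha_K$.
   Context: Product of Experts: for probability densities $p^{(1)},\dots,p^{(K)}$ on $\mathbb{R}^d$, $\mathrm{PoE}(p^{(1)},\dots,p^{(K)})({\mathbf{x}})=\sqrt[K]{p^{(1)}({\mathbf{x}})\cdots p^{(K)}({\mathbf{x}})}\,/\,Z_K$ with $Z_K=\int\sqrt[K]{p^{(1)}({\mathbf{z}})\cdots p^{(K)}({\mathbf{z}})}\,\mathrm{d}{\mathbf{z}}$ (the normalized geometric mean). Forward VP SDE: $\mathrm{d}{\mathbf{z}}_t=-\beta_t{\mathbf{z}}_t\,\mathrm{d}t+\sqrt{2\beta_t}\,\mathrm{d}{\mathbf{w}}_t$ on $[0,T]$, ${\mathbf{z}}_0\sim q_0$, with a positive variance schedule $\beta_t$ and standard Wiener process ${\mathbf{w}}_t$; its strong solution is ${\mathbf{z}}_t=\gamma_t{\mathbf{z}}_0+\eta_t$ with deterministic $\gamma_t\in(0,1)$ for $t>0$ and Gaussian $\eta_t$ independent of ${\mathbf{z}}_0$, such that if ${\mathbf{z}}_0\sim\mathcal{N}({\bm{0}},{\bm{\Sigma}})$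 then ${\mathbf{z}}_t\sim\mathcal{N}({\bm{0}},\gamma_t{\bm{\Sigma}}+(1-\gamma_t){\bm{I}})$. Here $p_t^{(k)}$ and $p_t$ are obtained by this diffusion from $p_0^{(k)}$ and $p_0$ respectively, and equality means equality of distributions. *)

theory Defs
  imports "HOL-Analysis.Analysis"
begin

definition iso_gauss :: "real \<Rightarrow> 'a::euclidean_space \<Rightarrow> real" where
  "iso_gauss s x = (2 * pi * s) powr (- real DIM('a) / 2) * exp (- (norm x)\<^sup>2 / (2 * s))"

definition poe :: "nat \<Rightarrow> (nat \<Rightarrow> 'a::euclidean_space \<Rightarrow> real) \<Rightarrow> 'a \<Rightarrow> real" where
  "poe K p x = (\<Prod>k<K. p k x) powr (1 / real K)
      / (\<integral>z. (\<Prod>k<K. p k z) powr (1 / real K) \<partial>lborel)"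

text \<open>Covariance factor of the VP SDE dz = -beta z dt + sqrt(2 beta) dw:
  z_t = exp(-B_t) z_0 + eta_t with B_t = int_0^t beta, so Cov(z_t) = gamma_t Sigma + (1-gamma_t) I
  with gamma_t = exp(-2 B_t).\<close>
definition vp_gamma :: "(real \<Rightarrow> real) \<Rightarrow> real \<Rightarrow> real" where
  "vp_gamma \<beta> t = exp (- 2 * integral {0..t} \<beta>)"

text \<open>Density at time t of the forward VP diffusion started from the density q:
  law of sqrt(gamma_t) z_0 + eta_t with eta_t ~ N(0,(1-gamma_t) I) independent of z_0.\<close>
definition vp_forward :: "(real \<Rightarrow> real) \<Rightarrow> real \<Rightarrow> ('a::euclidean_space \<Rightarrow> real) \<Rightarrow> 'a \<Rightarrow> real" where
  "vp_forward \<beta> t q x =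
     (\<integral>z. q z * iso_gauss (1 - vp_gamma \<beta> t) (x - sqrt (vp_gamma \<beta> t) *\<^sub>R z) \<partial>lborel)"

end

theory Submission
  imports Defs "HOL-Probability.Distributions"
begin

(* Everything stays Gaussian. The product of experts of N(0, a_k I) is N(0, h I) with h the
   harmonic mean of the a_k, and the VP diffusion maps N(0, s I) to N(0, (g s + 1 - g) I) with
   0 < g < 1. So the claim is that g h(a) + (1 - g) = h(g a + 1 - g) exactly when all a_k agree.
   With v_k = g + (1 - g) / a_k this equation becomes (sum v_k)(sum 1/v_k) = K^2, the equality
   case of the AM-HM inequality. *)

lemma power2_norm_eq_sum_Basis: "(norm (z::'a::euclidean_space))\<^sup>2 = (\<Sum>b\<in>Basis. (z \<bullet> b)\<^sup>2)"
  by (subst power2_norm_eq_inner) (simp add: euclidean_inner[of z z] power2_eq_square)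

lemma nn_integral_exp_neg_square_lborel:
  fixes l \<mu> :: real
  assumes l: "l > 0"
  shows "(\<integral>\<^sup>+x. ennreal (exp (- l * (x - \<mu>)\<^sup>2)) \<partial>lborel) = ennreal (sqrt (pi / l))"
proof -
  define \<sigma> where "\<sigma> = sqrt (1 / (2 * l))"
  have \<sigma>: "\<sigma> > 0" "\<sigma>\<^sup>2 = 1 / (2 * l)" using l by (simp_all add: \<sigma>_def)
  have "exp (- l * (x - \<mu>)\<^sup>2) = sqrt (pi / l) * normal_density \<mu> \<sigma> x" for x
    using l by (simp add: normal_density_def \<sigma> real_sqrt_divide field_simps)
  then have "(\<integral>\<^sup>+x. ennreal (exp (- l * (x - \<mu>)\<^sup>2)) \<partial>lborel)
      = ennreal (\<integral>x. sqrt (pi / l) * normal_density \<mu> \<sigma> x \<partial>lborel)"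
    using l \<sigma> by (simp only:) (intro nn_integral_eq_integral integrable_mult_right AE_I2; simp)
  then show ?thesis using integral_normal_density[OF \<sigma>(1)] by simp
qed

lemma has_bochner_integral_exp_neg_norm_square:
  fixes l :: real and m :: "'a::euclidean_space"
  assumes l: "l > 0"
  shows "has_bochner_integral lborel (\<lambda>z::'a. exp (- l * (norm (z - m))\<^sup>2))
           ((pi / l) powr (real DIM('a) / 2))"
proof (rule has_bochner_integral_nn_integral)
  have "exp (- l * (norm (z - m))\<^sup>2) = (\<Prod>b\<in>Basis. exp (- l * (z \<bullet> b - m \<bullet> b)\<^sup>2))" for z
    by (simp add: power2_norm_eq_sum_Basis inner_diff_left sum_distrib_left exp_sum flip: sum_negf)
  then have "(\<integral>\<^sup>+z. ennreal (exp (- l * (norm (z - m))\<^sup>2)) \<partial>lborel)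
      = (\<integral>\<^sup>+z. (\<Prod>b\<in>Basis. ennreal (exp (- l * (z \<bullet> b - m \<bullet> b)\<^sup>2))) \<partial>lborel)"
    by (simp add: prod_ennreal)
  also have "\<dots> = (\<Prod>b\<in>(Basis::'a set). \<integral>\<^sup>+x. ennreal (exp (- l * (x - m \<bullet> b)\<^sup>2)) \<partial>lborel)"
    by (rule nn_integral_lborel_prod) auto
  also have "\<dots> = (\<Prod>b\<in>(Basis::'a set). ennreal (sqrt (pi / l)))"
    using nn_integral_exp_neg_square_lborel[OF l] by (intro prod.cong) auto
  also have "\<dots> = ennreal (sqrt (pi / l) ^ DIM('a))"
    using l by (simp add: ennreal_power)
  also have "sqrt (pi / l) ^ DIM('a) = (pi / l) powr (real DIM('a) / 2)"
    using l by (simp add: sqrt_def root_powr_inverse powr_powr flip: powr_realpow)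
  finally show "(\<integral>\<^sup>+z. ennreal (exp (- l * (norm (z - m))\<^sup>2)) \<partial>lborel)
      = ennreal ((pi / l) powr (real DIM('a) / 2))" .
qed auto

lemma iso_gauss_pos: "s > 0 \<Longrightarrow> iso_gauss s x > 0"
  by (simp add: iso_gauss_def)

lemma borel_measurable_iso_gauss[measurable]: "iso_gauss s \<in> borel_measurable borel"
  unfolding iso_gauss_def by measurable

lemma has_bochner_integral_iso_gauss:
  assumes s: "s > 0"
  shows "has_bochner_integral lborel (iso_gauss s :: 'a::euclidean_space \<Rightarrow> real) 1"
proof -
  let ?e = "real DIM('a) / 2"
  have "has_bochner_integral lborel
      (\<lambda>z::'a. (2 * pi * s) powr (- ?e) * exp (- (1 / (2 * s)) * (norm (z - 0))\<^sup>2))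
      ((2 * pi * s) powr (- ?e) * (pi / (1 / (2 * s))) powr ?e)"
    using s by (intro has_bochner_integral_mult_right has_bochner_integral_exp_neg_norm_square) simp
  moreover have "(2 * pi * s) powr (- ?e) * (pi / (1 / (2 * s))) powr ?e = 1"
    using s by (simp add: powr_minus field_simps)
  ultimately show ?thesis
    by (simp add: iso_gauss_def[abs_def])
qed

lemma gaussian_exponent_complete_square:
  fixes a b c P Q R :: real
  assumes a: "a > 0" and b: "b > 0"
  defines "S \<equiv> c\<^sup>2 * a + b"
  shows "- P / (2 * a) - (R - 2 * c * Q + c\<^sup>2 * P) / (2 * b)
       = - R / (2 * S) - S / (2 * a * b) * (P - 2 * (c * a / S) * Q + (c * a / S)\<^sup>2 * R)"
proof -
  have S: "S > 0" unfolding S_def using a b by (simp add: add_nonneg_pos)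
  show ?thesis
    using a b S apply (simp add: field_simps power2_eq_square)
    using S_def by algebra
qed

lemma iso_gauss_convolution:
  fixes a b c :: real and x :: "'a::euclidean_space"
  assumes a: "a > 0" and b: "b > 0"
  shows "(\<integral>z. iso_gauss a z * iso_gauss b (x - c *\<^sub>R z) \<partial>lborel) = iso_gauss (c\<^sup>2 * a + b) x"
proof -
  let ?e = "real DIM('a) / 2"
  define S where "S = c\<^sup>2 * a + b"
  define \<mu> where "\<mu> = c * a / S"
  define C where "C = (2 * pi * a) powr (- ?e) * (2 * pi * b) powr (- ?e) * exp (- (norm x)\<^sup>2 / (2 * S))"
  have S: "S > 0" unfolding S_def using a b by (simp add: add_nonneg_pos)
  have integrand: "iso_gauss a z * iso_gauss b (x - c *\<^sub>R z)
      = C * exp (- (S / (2 * a * b)) * (norm (z - \<mu> *\<^sub>R x))\<^sup>2)" for z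
  proof -
    have "(norm (x - c *\<^sub>R z))\<^sup>2 = (norm x)\<^sup>2 - 2 * c * (x \<bullet> z) + c\<^sup>2 * (norm z)\<^sup>2"
      "(norm (z - \<mu> *\<^sub>R x))\<^sup>2 = (norm z)\<^sup>2 - 2 * \<mu> * (x \<bullet> z) + \<mu>\<^sup>2 * (norm x)\<^sup>2"
      unfolding power2_norm_eq_inner by (simp_all add: inner_commute power2_eq_square algebra_simps)
    then have "- (norm z)\<^sup>2 / (2 * a) - (norm (x - c *\<^sub>R z))\<^sup>2 / (2 * b)
        = - (norm x)\<^sup>2 / (2 * S) - S / (2 * a * b) * (norm (z - \<mu> *\<^sub>R x))\<^sup>2"
      unfolding S_def \<mu>_def by (simp only: gaussian_exponent_complete_square[OF a b])
    then show ?thesis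
      unfolding iso_gauss_def C_def by (simp add: mult_exp_exp algebra_simps flip: exp_add)
  qed
  have "has_bochner_integral lborel
      (\<lambda>z::'a. C * exp (- (S / (2 * a * b)) * (norm (z - \<mu> *\<^sub>R x))\<^sup>2))
      (C * (pi / (S / (2 * a * b))) powr ?e)"
    using a b S by (intro has_bochner_integral_mult_right has_bochner_integral_exp_neg_norm_square) simp
  then have "(\<integral>z. iso_gauss a z * iso_gauss b (x - c *\<^sub>R z) \<partial>lborel) = C * (pi / (S / (2 * a * b))) powr ?e"
    unfolding integrand by (simp add: has_bochner_integral_iff)
  also have "\<dots> = iso_gauss S x"
  proof -
    have "pi / (S / (2 * a * b)) = (2 * pi * a) * (2 * pi * b) / (2 * pi * S)"
      using a b S by (simp add: field_simps)
    then show ?thesis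
      unfolding C_def iso_gauss_def using a b S by (simp add: powr_minus powr_divide powr_mult field_simps)
  qed
  finally show ?thesis unfolding S_def .
qed

lemma vp_forward_iso_gauss:
  assumes s: "s > 0" and \<gamma>: "vp_gamma \<beta> t < 1"
  shows "vp_forward \<beta> t (iso_gauss s)
    = (iso_gauss (vp_gamma \<beta> t * s + (1 - vp_gamma \<beta> t)) :: 'a::euclidean_space \<Rightarrow> real)"
proof
  fix x :: 'a
  have "vp_forward \<beta> t (iso_gauss s) x = iso_gauss ((sqrt (vp_gamma \<beta> t))\<^sup>2 * s + (1 - vp_gamma \<beta> t)) x"
    unfolding vp_forward_def using s \<gamma> by (intro iso_gauss_convolution) auto
  then show "vp_forward \<beta> t (iso_gauss s) x = iso_gauss (vp_gamma \<beta> t * s + (1 - vp_gamma \<beta> t)) x"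
    by (simp add: vp_gamma_def)
qed

lemma vp_gamma_less_1:
  assumes "t > 0" and cont: "continuous_on {0..t} \<beta>" and pos: "\<forall>s\<in>{0..t}. \<beta> s > 0"
  shows "vp_gamma \<beta> t < 1"
proof -
  obtain s0 where s0: "s0 \<in> {0..t}" and min: "\<forall>s\<in>{0..t}. \<beta> s0 \<le> \<beta> s"
    using continuous_attains_inf[OF compact_Icc _ cont] \<open>t > 0\<close> by auto
  have "0 < t * \<beta> s0" using pos s0 \<open>t > 0\<close> by simp
  also have "\<dots> = integral {0..t} (\<lambda>_. \<beta> s0)" using \<open>t > 0\<close> by simp
  also have "\<dots> \<le> integral {0..t} \<beta>"
    using min cont by (intro integral_le integrable_continuous_interval) auto
  finally show ?thesis unfolding vp_gamma_def by simp
qed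

lemma density_iso_gauss_eq_iff:
  assumes s: "s > 0" and r: "r > 0"
  shows "density lborel (\<lambda>x. ennreal (iso_gauss s x))
      = density lborel (\<lambda>x::'a::euclidean_space. ennreal (iso_gauss r x)) \<longleftrightarrow> s = r"
proof
  let ?e = "real DIM('a) / 2"
  \<comment> \<open>Integrating the test function \<open>iso_gauss 1\<close> against \<open>N(0, v I)\<close> gives a convolution at 0.\<close>
  have test: "integral\<^sup>L (density lborel (\<lambda>x::'a. ennreal (iso_gauss v x))) (iso_gauss 1)
      = (2 * pi * (v + 1)) powr (- ?e)" if v: "v > 0" for v
  proof -
    have "integral\<^sup>L (density lborel (\<lambda>x::'a. ennreal (iso_gauss v x))) (iso_gauss 1)
        = (\<integral>z. iso_gauss v z * iso_gauss 1 (0 - 1 *\<^sub>R z) \<partial>(lborel :: 'a measure))"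
      using v by (subst integral_density) (auto intro!: less_imp_le iso_gauss_pos simp: iso_gauss_def)
    also have "\<dots> = iso_gauss (v + 1) (0::'a)"
      using iso_gauss_convolution[OF v, of 1 0 1] by simp
    finally show ?thesis by (simp add: iso_gauss_def)
  qed
  assume "density lborel (\<lambda>x. ennreal (iso_gauss s x)) = density lborel (\<lambda>x::'a. ennreal (iso_gauss r x))"
  then have "(2 * pi * (s + 1)) powr (- ?e) = (2 * pi * (r + 1)) powr (- ?e)"
    using test[OF s] test[OF r] by simp
  then have "ln (2 * pi * (s + 1)) = ln (2 * pi * (r + 1))"
    using s r by (simp add: powr_def)
  then show "s = r" using s r by simp
qed simp

definition harmonic_mean :: "nat \<Rightarrow> (nat \<Rightarrow> real) \<Rightarrow> real" where
  "harmonic_mean K s = real K / (\<Sum>k<K. 1 / s k)"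

lemma harmonic_mean_pos: "K > 0 \<Longrightarrow> \<forall>k<K. s k > 0 \<Longrightarrow> harmonic_mean K s > 0"
  unfolding harmonic_mean_def by (intro divide_pos_pos sum_pos) auto

lemma geometric_mean_iso_gauss:
  fixes s :: "nat \<Rightarrow> real"
  assumes K: "K > 0" and s: "\<forall>k<K. s k > 0"
  shows "\<exists>C>0. \<forall>x::'a::euclidean_space.
    (\<Prod>k<K. iso_gauss (s k) x) powr (1 / real K) = C * iso_gauss (harmonic_mean K s) x"
proof -
  let ?e = "real DIM('a) / 2"
  define h where "h = harmonic_mean K s"
  define A where "A = (\<Prod>k<K. (2 * pi * s k) powr (- ?e))"
  have h: "h > 0" unfolding h_def using harmonic_mean_pos[OF K s] .
  have A: "A > 0" unfolding A_def using s by (intro prod_pos) auto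
  have "(\<Prod>k<K. iso_gauss (s k) x) powr (1 / real K)
      = A powr (1 / real K) / (2 * pi * h) powr (- ?e) * iso_gauss h x" for x :: 'a
  proof -
    have "(\<Prod>k<K. iso_gauss (s k) x) = A * exp (- (norm x)\<^sup>2 / 2 * (\<Sum>k<K. 1 / s k))"
      unfolding A_def iso_gauss_def by (simp add: exp_sum prod.distrib sum_distrib_left)
    moreover have "- (norm x)\<^sup>2 / 2 * (\<Sum>k<K. 1 / s k) * (1 / real K) = - (norm x)\<^sup>2 / (2 * h)"
      using h K unfolding h_def harmonic_mean_def by (simp add: field_simps)
    ultimately show ?thesis
      using A h by (simp add: powr_mult exp_powr_real iso_gauss_def)
  qed
  then show ?thesis
    using A h by (intro exI[of _ "A powr (1 / real K) / (2 * pi * h) powr (- ?e)"]) (simp add: h_def)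
qed

lemma poe_iso_gauss:
  fixes s :: "nat \<Rightarrow> real" and p :: "nat \<Rightarrow> 'a::euclidean_space \<Rightarrow> real"
  assumes K: "K > 0" and s: "\<forall>k<K. s k > 0" and p: "\<forall>k<K. p k = iso_gauss (s k)"
  shows "poe K p = iso_gauss (harmonic_mean K s)"
proof -
  obtain C where C: "C > 0"
    and gm: "\<And>x::'a. (\<Prod>k<K. iso_gauss (s k) x) powr (1 / real K) = C * iso_gauss (harmonic_mean K s) x"
    using geometric_mean_iso_gauss[OF K s] by blast
  have prod_p: "(\<Prod>k<K. p k x) = (\<Prod>k<K. iso_gauss (s k) x)" for x
    using p by (intro prod.cong) auto
  have "(\<integral>z. C * iso_gauss (harmonic_mean K s) z \<partial>(lborel :: 'a measure)) = C"
    using has_bochner_integral_iso_gauss[OF harmonic_mean_pos[OF K s], where 'a='a]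
    by (simp add: has_bochner_integral_iff)
  then show ?thesis
    unfolding poe_def prod_p gm using C by (simp add: fun_eq_iff)
qed

lemma sum_times_sum_inverse_eq_card_sq_iff:
  fixes v :: "'b \<Rightarrow> real"
  assumes fin: "finite A" and pos: "\<forall>i\<in>A. v i > 0"
  shows "(\<Sum>i\<in>A. v i) * (\<Sum>i\<in>A. 1 / v i) = (real (card A))\<^sup>2 \<longleftrightarrow> (\<forall>i\<in>A. \<forall>j\<in>A. v i = v j)"
proof -
  define D where "D i j = (v i - v j)\<^sup>2 / (v i * v j)" for i j
  have D: "D i j = v i * (1 / v j) + v j * (1 / v i) - 2" if "i \<in> A" "j \<in> A" for i j
    using pos[rule_format, OF that(1)] pos[rule_format, OF that(2)]
    unfolding D_def by (simp add: field_simps power2_eq_square)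
  have D_nonneg: "D i j \<ge> 0" if "i \<in> A" "j \<in> A" for i j
    using pos that unfolding D_def by (intro divide_nonneg_pos) auto
  have "(\<Sum>i\<in>A. \<Sum>j\<in>A. D i j)
      = (\<Sum>i\<in>A. \<Sum>j\<in>A. v i * (1 / v j)) + (\<Sum>i\<in>A. \<Sum>j\<in>A. v j * (1 / v i)) - 2 * (real (card A))\<^sup>2"
    by (simp add: D sum.distrib sum_subtractf power2_eq_square cong: sum.cong)
  also have "\<dots> = 2 * ((\<Sum>i\<in>A. v i) * (\<Sum>i\<in>A. 1 / v i) - (real (card A))\<^sup>2)"
    by (subst (2) sum.swap) (simp add: sum_product)
  finally have "(\<Sum>i\<in>A. v i) * (\<Sum>i\<in>A. 1 / v i) = (real (card A))\<^sup>2
      \<longleftrightarrow> (\<Sum>i\<in>A. \<Sum>j\<in>A. D i j) = 0"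
    by auto
  also have "\<dots> \<longleftrightarrow> (\<forall>i\<in>A. \<forall>j\<in>A. D i j = 0)"
    using fin D_nonneg by (simp add: sum_nonneg_eq_0_iff sum_nonneg)
  also have "\<dots> \<longleftrightarrow> (\<forall>i\<in>A. \<forall>j\<in>A. v i = v j)"
    using pos unfolding D_def by (auto simp: less_imp_neq[symmetric])
  finally show ?thesis .
qed

lemma affine_harmonic_mean_eq_iff:
  fixes \<alpha> :: "nat \<Rightarrow> real"
  assumes K: "K > 0" and \<alpha>: "\<forall>k<K. \<alpha> k > 0" and \<gamma>: "\<gamma> > 0" and c: "c > 0"
  shows "\<gamma> * harmonic_mean K \<alpha> + c = harmonic_mean K (\<lambda>k. \<gamma> * \<alpha> k + c)
    \<longleftrightarrow> (\<forall>j<K. \<forall>k<K. \<alpha> j = \<alpha> k)"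
proof -
  define v where "v k = \<gamma> + c / \<alpha> k" for k
  define U where "U = (\<Sum>k<K. 1 / \<alpha> k)"
  define V where "V = (\<Sum>k<K. v k)"
  define W where "W = (\<Sum>k<K. 1 / v k)"
  have v: "\<forall>k<K. v k > 0" using \<alpha> \<gamma> c unfolding v_def by (auto intro: add_pos_pos)
  have U: "U > 0" unfolding U_def using K \<alpha> by (intro sum_pos) auto
  have V: "V = \<gamma> * real K + c * U"
    unfolding V_def U_def v_def by (simp add: sum.distrib sum_distrib_left)
  have "1 / (\<gamma> * \<alpha> k + c) = (1 - \<gamma> / v k) / c" if "k < K" for k
  proof -
    have "\<alpha> k > 0" "\<gamma> * \<alpha> k + c > 0" using \<alpha> \<gamma> c that by (auto intro: add_pos_pos)
    then show ?thesis
      using mult_pos_pos[OF c \<open>\<gamma> * \<alpha> k + c > 0\<close>] unfolding v_def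
      by (simp add: field_simps)
  qed
  then have sum_inverse: "(\<Sum>k<K. 1 / (\<gamma> * \<alpha> k + c)) = (real K - \<gamma> * W) / c"
    unfolding W_def by (simp add: sum_subtractf sum_distrib_left flip: sum_divide_distrib)
  have "(\<Sum>k<K. 1 / (\<gamma> * \<alpha> k + c)) > 0"
    using K \<alpha> \<gamma> c by (intro sum_pos) (auto intro: add_pos_pos)
  then have KW: "real K - \<gamma> * W > 0" using sum_inverse c by (simp add: zero_less_divide_iff)
  have "\<gamma> * harmonic_mean K \<alpha> + c = harmonic_mean K (\<lambda>k. \<gamma> * \<alpha> k + c)
      \<longleftrightarrow> V / U = real K * c / (real K - \<gamma> * W)"
    using U c unfolding harmonic_mean_def sum_inverse V U_def[symmetric] by (simp add: field_simps)
  also have "\<dots> \<longleftrightarrow> \<gamma> * (V * W) = \<gamma> * (real K)\<^sup>2"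
    using U KW unfolding V by (simp add: field_simps power2_eq_square) argo
  also have "\<dots> \<longleftrightarrow> (\<forall>i\<in>{..<K}. \<forall>j\<in>{..<K}. v i = v j)"
    using \<gamma> v sum_times_sum_inverse_eq_card_sq_iff[of "{..<K}" v] unfolding V_def W_def by simp
  also have "\<dots> \<longleftrightarrow> (\<forall>j<K. \<forall>k<K. \<alpha> j = \<alpha> k)"
    using c unfolding v_def by auto
  finally show ?thesis .
qed

theorem proposition4:
  fixes K :: nat and \<alpha> :: "nat \<Rightarrow> real" and \<beta> :: "real \<Rightarrow> real" and T t :: real
    and p0 :: "nat \<Rightarrow> 'a::euclidean_space \<Rightarrow> real"
  assumes "K > 1"
    and "\<forall>k<K. \<alpha> k > 0"
    and "p0 = (\<lambda>k. iso_gauss (\<alpha> k))"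
    and "T > 0" and "continuous_on {0..T} \<beta>" and "\<forall>s\<in>{0..T}. \<beta> s > 0"
    and "t \<in> {0<..T}"
  shows "density lborel (\<lambda>x. ennreal (vp_forward \<beta> t (poe K p0) x))
           = density lborel (\<lambda>x. ennreal (poe K (\<lambda>k. vp_forward \<beta> t (p0 k)) x))
         \<longleftrightarrow> (\<forall>j<K. \<forall>k<K. \<alpha> j = \<alpha> k)"
proof -
  define \<gamma> where "\<gamma> = vp_gamma \<beta> t"
  have K: "K > 0" using assms(1) by simp
  have "\<gamma> < 1"
    unfolding \<gamma>_def using assms(6,7)
    by (intro vp_gamma_less_1 continuous_on_subset[OF assms(5)]) auto
  then have \<gamma>: "0 < \<gamma>" "\<gamma> < 1" by (simp_all add: \<gamma>_def vp_gamma_def)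
  have diffused_pos: "\<forall>k<K. \<gamma> * \<alpha> k + (1 - \<gamma>) > 0"
    using assms(2) \<gamma> by (auto intro: add_pos_pos)
  have "vp_forward \<beta> t (poe K p0) = iso_gauss (\<gamma> * harmonic_mean K \<alpha> + (1 - \<gamma>))"
    using assms(2,3) \<gamma> unfolding \<gamma>_def
    by (simp add: poe_iso_gauss[OF K assms(2)] vp_forward_iso_gauss harmonic_mean_pos[OF K])
  moreover have "poe K (\<lambda>k. vp_forward \<beta> t (p0 k))
      = iso_gauss (harmonic_mean K (\<lambda>k. \<gamma> * \<alpha> k + (1 - \<gamma>)))"
    using assms(2,3) \<gamma> unfolding \<gamma>_def
    by (intro poe_iso_gauss[OF K diffused_pos[unfolded \<gamma>_def]]) (simp add: vp_forward_iso_gauss)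
  ultimately show ?thesis
    using \<gamma> harmonic_mean_pos[OF K assms(2)] harmonic_mean_pos[OF K diffused_pos]
    by (simp add: density_iso_gauss_eq_iff affine_harmonic_mean_eq_iff[OF K assms(2)] add_pos_pos)
qed

end
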